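(* Let $E$ be a separable real Hilbert space, $0<p<\infty$, $\mu\in\mathcal{W}_p(E)$, $x\in E\setminus\{0\}$ and $a,b\in\mathbb{R}$ with $a\neq b$. For $0\le\alpha\le1$ let $\zeta^\alpha_{a,b}(x):=\alpha\delta_{ax}+(1-\alpha)\delta_{bx}$, and set $m:=\min\{d_{\mathcal{W}_p}(\mu,\zeta^\alpha_{a,b}(x))\colon 0\le\alpha\le1\}$. Then $$\mu\big(B(ax,bx)\big)=\max\{\alpha\colon d_{\mathcal{W}_p}(\mu,\zeta^\alpha_{a,b}(x))=m\}-\min\{\alpha\colon d_{\mathcal{W}_p}(\mu,\zeta^\alpha_{a,b}(x))=m\},$$ where $B(y,z):=\{w\in E\colon\|y-w\|=\|z-w\|\}$ is the bisector hyperplane of $y\neq z$.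
   Context: For $0<p<\infty$, $\mathcal{W}_p(E)$ is the set of Borel probability measures $\mu$ on $E$ with $\int_E\|x\|^p\,d\mu(x)<\infty$, equipped with $d_{\mathcal{W}_p}(\mu,\nu)=\big(\inf_{\pi\in\Pi(\mu,\nu)}\int_{E\times E}\|x-y\|^p\,d\pi(x,y)\big)^{\min\{1/p,1\}}$, where $\Pi(\mu,\nu)$ is the set of Borel probability measures on $E\times E$ with marginals $\mu$ and $\nu$. *)

theory Defs
  imports "HOL-Probability.Probability"
begin

definition Wp_space :: "real \<Rightarrow> ('a::{real_normed_vector, second_countable_topology}) measure set" where
  "Wp_space p = {\<mu>. prob_space \<mu> \<and> sets \<mu> = sets borel \<and>
      (\<integral>\<^sup>+ x. ennreal (norm x powr p) \<partial>\<mu>) < \<infinity>}"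

definition couplings :: "'a::{real_normed_vector, second_countable_topology} measure \<Rightarrow> 'a measure \<Rightarrow> ('a \<times> 'a) measure set" where
  "couplings \<mu> \<nu> = {\<pi>. prob_space \<pi> \<and> sets \<pi> = sets borel \<and>
      distr \<pi> borel fst = \<mu> \<and> distr \<pi> borel snd = \<nu>}"

definition wasserstein :: "real \<Rightarrow> 'a::{real_normed_vector, second_countable_topology} measure \<Rightarrow> 'a measure \<Rightarrow> real" where
  "wasserstein p \<mu> \<nu> =
     (enn2real (INF \<pi>\<in>couplings \<mu> \<nu>. \<integral>\<^sup>+ z. ennreal (norm (fst z - snd z) powr p) \<partial>\<pi>)) powr (min (1/p) 1)"

definition zeta :: "real \<Rightarrow> real \<Rightarrow> real \<Rightarrow> 'a::{real_normed_vector, second_countable_topology} \<Rightarrow> 'a measure" where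
  "zeta \<alpha> a b x = measure_of UNIV (sets borel)
     (\<lambda>A. ennreal \<alpha> * indicator A (a *\<^sub>R x) + ennreal (1 - \<alpha>) * indicator A (b *\<^sub>R x))"

definition bisector :: "'a::real_normed_vector \<Rightarrow> 'a \<Rightarrow> 'a set" where
  "bisector y z = {w. norm (y - w) = norm (z - w)}"

end

theory Submission
  imports Defs
begin

text \<open>Write \<open>y = a x\<close>, \<open>z = b x\<close> and \<open>c(w, v) = \<parallel>w - v\<parallel>\<^sup>p\<close>. Every coupling of \<open>\<mu>\<close> with
  \<open>\<zeta>\<^sup>\<alpha>\<close> transports all mass to \<open>{y, z}\<close>, so its cost is at least
  \<open>L = \<integral> min (c(w, y), c(w, z)) d\<mu>\<close>. Sending the points strictly closer to \<open>y\<close> to \<open>y\<close>, those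
  strictly closer to \<open>z\<close> to \<open>z\<close>, and splitting the bisector in any proportion attains \<open>L\<close>; this
  is possible exactly for \<open>\<alpha>\<close> between \<open>\<mu>{closer to y}\<close> and \<open>\<mu>{not farther from y}\<close>. For
  any other \<open>\<alpha>\<close> a fixed positive mass must travel to the worse point with a uniform loss, so the
  cost exceeds \<open>L\<close>. Hence the minimisers of \<open>\<alpha> \<mapsto> W\<^sub>p(\<mu>, \<zeta>\<^sup>\<alpha>)\<close> form an interval whose
  length is the mass of the bisector.\<close>

lemma powr_less_powr_iff:
  fixes x y a :: real
  assumes "0 < a" "0 \<le> x" "0 \<le> y"
  shows "x powr a < y powr a \<longleftrightarrow> x < y"
  using assms powr_less_mono2[of a] by (metis not_less order.order_iff_strict)

lemma add_powr_le_two_powr: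
  fixes s t p :: real
  assumes "0 \<le> s" "0 \<le> t" "0 \<le> p"
  shows "(s + t) powr p \<le> 2 powr p * (s powr p + t powr p)"
proof -
  have "(s + t) powr p \<le> (2 * max s t) powr p"
    using assms by (intro powr_mono2) auto
  also have "\<dots> = 2 powr p * max s t powr p"
    using assms by (simp add: powr_mult)
  also have "max s t powr p \<le> s powr p + t powr p"
    by (simp add: max_def)
  finally show ?thesis
    by simp
qed

lemma argmin_set_eqI:
  fixes F :: "'a \<Rightarrow> 'b::conditionally_complete_linorder"
  assumes "I \<subseteq> X" "I \<noteq> {}" "\<And>\<alpha>. \<alpha> \<in> I \<Longrightarrow> F \<alpha> = v" "\<And>\<alpha>. \<alpha> \<in> X - I \<Longrightarrow> v < F \<alpha>"
  shows "{\<alpha> \<in> X. F \<alpha> = (INF \<alpha>\<in>X. F \<alpha>)} = I"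
proof -
  have "(INF \<alpha>\<in>X. F \<alpha>) = v"
    using assms by (intro cInf_eq_minimum) (fastforce intro: less_imp_le)+
  then show ?thesis
    using assms by fastforce
qed

lemma (in finite_measure) measure_margin_set_gt:
  fixes f g :: "'a \<Rightarrow> real"
  assumes [measurable]: "f \<in> borel_measurable M" "g \<in> borel_measurable M"
    and "\<alpha> < measure M {w \<in> space M. f w < g w}"
  shows "\<exists>\<epsilon>>0. \<alpha> < measure M {w \<in> space M. f w + \<epsilon> \<le> g w}"
proof -
  define D where "D n = {w \<in> space M. f w + 1 / Suc n \<le> g w}" for n :: nat
  have "range D \<subseteq> sets M"
    unfolding D_def by auto
  moreover have "incseq D"
  proof (rule incseq_SucI)
    fix n
    have "1 / real (Suc (Suc n)) \<le> 1 / real (Suc n)"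
      by (simp add: frac_le)
    then show "D n \<subseteq> D (Suc n)"
      unfolding D_def by auto
  qed
  ultimately have "(\<lambda>n. measure M (D n)) \<longlonglongrightarrow> measure M (\<Union>n. D n)"
    by (rule finite_Lim_measure_incseq)
  moreover have "(\<Union>n. D n) = {w \<in> space M. f w < g w}"
  proof (intro set_eqI iffI)
    fix w assume "w \<in> (\<Union>n. D n)"
    then obtain n where "w \<in> space M" "f w + 1 / Suc n \<le> g w"
      unfolding D_def by blast
    moreover have "0 < 1 / real (Suc n)"
      by simp
    ultimately show "w \<in> {w \<in> space M. f w < g w}"
      by (smt (verit) mem_Collect_eq)
  next
    fix w assume w: "w \<in> {w \<in> space M. f w < g w}"
    then obtain n where "1 / Suc n < g w - f w"
      using reals_Archimedean[of "g w - f w"] by (auto simp: inverse_eq_divide)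
    then have "f w + 1 / Suc n \<le> g w"
      by linarith
    with w show "w \<in> (\<Union>n. D n)"
      unfolding D_def by blast
  qed
  ultimately have "eventually (\<lambda>n. \<alpha> < measure M (D n)) sequentially"
    using assms(3) by (simp add: order_tendstoD(1))
  then obtain n where "\<alpha> < measure M (D n)"
    by (auto simp: eventually_sequentially)
  then show ?thesis
    unfolding D_def by (intro exI[of _ "1 / Suc n"]) auto
qed

lemma obtain_interpolation_weight:
  fixes a m \<alpha> :: real
  assumes "0 \<le> m" "a \<le> \<alpha>" "\<alpha> \<le> a + m"
  obtains t where "0 \<le> t" "t \<le> 1" "a + t * m = \<alpha>"
proof (cases "m = 0")
  case True
  then show ?thesis
    using that[of 0] assms by simp
next
  case False
  then show ?thesis
    using that[of "(\<alpha> - a) / m"] assms by (simp add: divide_le_eq_1)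
qed

lemma ennreal_weighted_eq_min:
  fixes u v \<theta> :: real
  assumes "0 \<le> \<theta>" "\<theta> \<le> 1" "u < v \<Longrightarrow> \<theta> = 1" "v < u \<Longrightarrow> \<theta> = 0"
  shows "ennreal \<theta> * ennreal u + ennreal (1 - \<theta>) * ennreal v = ennreal (min u v)"
proof (cases u v rule: linorder_cases)
  case equal
  have "ennreal \<theta> + ennreal (1 - \<theta>) = 1"
    using assms(1,2) by (simp add: ennreal_plus[symmetric] del: ennreal_plus)
  then show ?thesis
    using equal by (simp add: distrib_right[symmetric])
qed (use assms in auto)

lemma measurable_Pair_const_borel:
  "(\<lambda>w. (w, v)) \<in> measurable borel (borel :: ('a::second_countable_topology \<times> 'b::second_countable_topology) measure)"
  by (metis borel_prod measurable_Pair2' UNIV_I space_borel)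

lemma measurable_fst_borel: "fst \<in> borel_measurable (borel :: ('a::second_countable_topology \<times> 'b::second_countable_topology) measure)"
  by (subst borel_prod[symmetric]) measurable

lemma measurable_snd_borel: "snd \<in> borel_measurable (borel :: ('a::second_countable_topology \<times> 'b::second_countable_topology) measure)"
  by (subst borel_prod[symmetric]) measurable

lemma Times_in_sets_borel:
  "D \<in> sets borel \<Longrightarrow> E \<in> sets borel \<Longrightarrow> D \<times> E \<in> sets (borel :: ('a::second_countable_topology \<times> 'b::second_countable_topology) measure)"
  by (metis borel_prod pair_measureI)

lemma nn_integral_uniform_threshold:
  assumes "0 \<le> t" "t \<le> 1"
  shows "(\<integral>\<^sup>+u. G (if u < t then y else z) \<partial>uniform_measure lborel {0..1::real})
     = ennreal t * G y + ennreal (1 - t) * G z"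
proof -
  let ?U = "uniform_measure lborel {0..1::real}"
  have "{0..1} \<inter> {..<t} = {0..<t}" "{0..1} \<inter> {t..} = {t..1}"
    using assms by auto
  then have U: "emeasure ?U {..<t} = ennreal t" "emeasure ?U {t..} = ennreal (1 - t)"
    using assms by (simp_all add: divide_ennreal_def)
  have "(\<integral>\<^sup>+u. G (if u < t then y else z) \<partial>?U) = (\<integral>\<^sup>+u. G y * indicator {..<t} u + G z * indicator {t..} u \<partial>?U)"
    by (rule nn_integral_cong) (auto simp: indicator_def)
  also have "\<dots> = G y * emeasure ?U {..<t} + G z * emeasure ?U {t..}"
    by (subst nn_integral_add) (auto simp: nn_integral_cmult_indicator)
  finally show ?thesis
    unfolding U by (simp add: mult.commute)
qed

lemma sets_zeta [simp]: "sets (zeta \<alpha> a b x) = sets borel"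
  unfolding zeta_def by (simp add: sets_measure_of_conv) (metis sets.sigma_sets_eq space_borel)

lemma emeasure_zeta:
  assumes "A \<in> sets borel"
  shows "emeasure (zeta \<alpha> a b x) A = ennreal \<alpha> * indicator A (a *\<^sub>R x) + ennreal (1 - \<alpha>) * indicator A (b *\<^sub>R x)"
  unfolding zeta_def
proof (rule emeasure_measure_of_sigma)
  show "sigma_algebra UNIV (sets (borel :: 'a measure))"
    by (metis sets.sigma_algebra_axioms space_borel)
  show "countably_additive (sets borel)
      (\<lambda>A. ennreal \<alpha> * indicator A (a *\<^sub>R x) + ennreal (1 - \<alpha>) * indicator A (b *\<^sub>R x))"
    by (auto simp: countably_additive_def suminf_add[symmetric] suminf_indicator)
qed (use assms in \<open>auto simp: positive_def\<close>)

lemma zeta_swap: "zeta \<alpha> a b x = zeta (1 - \<alpha>) b a x"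
  unfolding zeta_def by (simp add: add.commute)

lemma AE_zeta: "AE v in zeta \<alpha> a b x. v \<in> {a *\<^sub>R x, b *\<^sub>R x}"
  by (rule AE_I'[of "- {a *\<^sub>R x, b *\<^sub>R x}"]) (auto simp: emeasure_zeta)

definition split_coupling :: "'a::topological_space measure \<Rightarrow> ('a \<Rightarrow> real) \<Rightarrow> 'a \<Rightarrow> 'a \<Rightarrow> ('a \<times> 'a) measure" where
  "split_coupling \<mu> \<phi> y z =
     distr (\<mu> \<Otimes>\<^sub>M uniform_measure lborel {0..1}) borel (\<lambda>(w, u). (w, if u < \<phi> w then y else z))"

lemma measurable_split_map:
  fixes \<mu> :: "'a::second_countable_topology measure" and \<phi> :: "'a \<Rightarrow> real" and y z :: 'a
  assumes "sets \<mu> = sets borel" "\<phi> \<in> borel_measurable borel"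
  shows "(\<lambda>(w, u). (w, if u < \<phi> w then y else z)) \<in> (\<mu> \<Otimes>\<^sub>M uniform_measure lborel {0..1}) \<rightarrow>\<^sub>M borel"
proof -
  have sets: "sets (\<mu> \<Otimes>\<^sub>M uniform_measure lborel {0..1}) = sets (borel \<Otimes>\<^sub>M (borel :: real measure))"
    using assms(1) by (intro sets_pair_measure_cong) auto
  have "(\<lambda>(w, u). (w, if u < \<phi> w then y else z)) \<in> (borel \<Otimes>\<^sub>M borel) \<rightarrow>\<^sub>M (borel \<Otimes>\<^sub>M borel)"
    using assms(2) by measurable
  then show ?thesis
    unfolding measurable_cong_sets[OF sets refl] borel_prod .
qed

lemma
  fixes \<mu> :: "'a::second_countable_topology measure" and \<phi> :: "'a \<Rightarrow> real" and y z :: 'a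
  assumes \<mu>: "prob_space \<mu>" "sets \<mu> = sets borel"
    and \<phi>: "\<phi> \<in> borel_measurable borel" "\<And>w. 0 \<le> \<phi> w \<and> \<phi> w \<le> 1"
  shows prob_space_split_coupling: "prob_space (split_coupling \<mu> \<phi> y z)"
    and nn_integral_split_coupling: "G \<in> borel_measurable borel \<Longrightarrow>
      (\<integral>\<^sup>+q. G q \<partial>split_coupling \<mu> \<phi> y z) = (\<integral>\<^sup>+w. ennreal (\<phi> w) * G (w, y) + ennreal (1 - \<phi> w) * G (w, z) \<partial>\<mu>)"
proof -
  let ?U = "uniform_measure lborel {0..1::real}"
  let ?g = "\<lambda>(w, u). (w, if u < \<phi> w then y else z)"
  interpret U: prob_space ?U
    by (rule prob_space_uniform_measure) auto
  interpret M: prob_space \<mu>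
    by (rule \<mu>(1))
  interpret pair_prob_space \<mu> ?U ..
  have g: "?g \<in> (\<mu> \<Otimes>\<^sub>M ?U) \<rightarrow>\<^sub>M borel"
    using \<mu>(2) \<phi>(1) by (rule measurable_split_map)
  show "prob_space (split_coupling \<mu> \<phi> y z)"
    unfolding split_coupling_def using g by (rule prob_space_distr)
  assume G: "G \<in> borel_measurable borel"
  have "(\<integral>\<^sup>+q. G q \<partial>split_coupling \<mu> \<phi> y z) = (\<integral>\<^sup>+q. G (?g q) \<partial>(\<mu> \<Otimes>\<^sub>M ?U))"
    unfolding split_coupling_def by (rule nn_integral_distr[OF g]) (use G in simp)
  also have "\<dots> = (\<integral>\<^sup>+w. \<integral>\<^sup>+u. G (?g (w, u)) \<partial>?U \<partial>\<mu>)"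
    using measurable_comp[OF g G] by (intro U.nn_integral_fst[symmetric]) (simp add: comp_def)
  also have "\<dots> = (\<integral>\<^sup>+w. ennreal (\<phi> w) * G (w, y) + ennreal (1 - \<phi> w) * G (w, z) \<partial>\<mu>)"
  proof (rule nn_integral_cong)
    fix w
    show "(\<integral>\<^sup>+u. G (?g (w, u)) \<partial>?U) = ennreal (\<phi> w) * G (w, y) + ennreal (1 - \<phi> w) * G (w, z)"
      using nn_integral_uniform_threshold[of "\<phi> w" "\<lambda>v. G (w, v)" y z] \<phi>(2)[of w] by simp
  qed
  finally show "(\<integral>\<^sup>+q. G q \<partial>split_coupling \<mu> \<phi> y z) = \<dots>" .
qed

lemma distr_fst_split_coupling:
  fixes \<mu> :: "'a::second_countable_topology measure" and \<phi> :: "'a \<Rightarrow> real" and y z :: 'a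
  assumes \<mu>: "prob_space \<mu>" "sets \<mu> = sets borel" and \<phi>: "\<phi> \<in> borel_measurable borel"
  shows "distr (split_coupling \<mu> \<phi> y z) borel fst = \<mu>"
proof -
  let ?U = "uniform_measure lborel {0..1::real}"
  let ?g = "\<lambda>(w, u). (w, if u < \<phi> w then y else z)"
  interpret M: prob_space \<mu>
    by (rule \<mu>(1))
  interpret U: prob_space ?U
    by (rule prob_space_uniform_measure) auto
  have g: "?g \<in> (\<mu> \<Otimes>\<^sub>M ?U) \<rightarrow>\<^sub>M borel"
    using \<mu>(2) \<phi> by (rule measurable_split_map)
  have "distr (split_coupling \<mu> \<phi> y z) borel fst = distr (\<mu> \<Otimes>\<^sub>M ?U) borel (fst \<circ> ?g)"
    unfolding split_coupling_def by (rule distr_distr[OF measurable_fst_borel g])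
  also have "\<dots> = distr (\<mu> \<Otimes>\<^sub>M ?U) \<mu> fst"
    using \<mu>(2) by (intro distr_cong) (auto simp: split_beta)
  also have "\<dots> = \<mu>"
    by (rule U.distr_pair_fst)
  finally show ?thesis .
qed

lemma distr_snd_split_coupling:
  fixes \<mu> :: "'a::{real_normed_vector, second_countable_topology} measure" and \<phi> :: "'a \<Rightarrow> real"
  assumes \<mu>: "prob_space \<mu>" "sets \<mu> = sets borel"
    and \<phi>: "\<phi> \<in> borel_measurable borel" "\<And>w. 0 \<le> \<phi> w \<and> \<phi> w \<le> 1" "(\<integral>w. \<phi> w \<partial>\<mu>) = \<alpha>"
  shows "distr (split_coupling \<mu> \<phi> (a *\<^sub>R x) (b *\<^sub>R x)) borel snd = zeta \<alpha> a b x"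
proof (rule measure_eqI)
  let ?\<pi> = "split_coupling \<mu> \<phi> (a *\<^sub>R x) (b *\<^sub>R x)"
  interpret M: prob_space \<mu>
    by (rule \<mu>(1))
  have \<phi>_meas: "\<phi> \<in> borel_measurable \<mu>"
    using \<phi>(1) unfolding measurable_cong_sets[OF \<mu>(2) refl] .
  have \<phi>_int: "integrable \<mu> \<phi>"
    using \<phi>(2) \<phi>_meas by (intro M.integrable_const_bound[where B = 1]) auto
  have "(\<integral>\<^sup>+w. ennreal (\<phi> w) \<partial>\<mu>) = ennreal \<alpha>"
    using \<phi> \<phi>_int by (subst nn_integral_eq_integral) auto
  moreover have "(\<integral>\<^sup>+w. ennreal (1 - \<phi> w) \<partial>\<mu>) = ennreal (1 - \<alpha>)"
    using \<phi> \<phi>_int by (subst nn_integral_eq_integral) (auto simp: M.prob_space)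
  ultimately have weights: "(\<integral>\<^sup>+w. ennreal (\<phi> w) * G (a *\<^sub>R x) + ennreal (1 - \<phi> w) * G (b *\<^sub>R x) \<partial>\<mu>)
      = ennreal \<alpha> * G (a *\<^sub>R x) + ennreal (1 - \<alpha>) * G (b *\<^sub>R x)" for G :: "'a \<Rightarrow> ennreal"
    using \<phi>_meas by (subst nn_integral_add) (auto simp: nn_integral_multc)
  fix A assume "A \<in> sets (distr ?\<pi> borel snd)"
  then have A: "A \<in> sets borel"
    by simp
  have "emeasure (distr ?\<pi> borel snd) A = (\<integral>\<^sup>+v. indicator A v \<partial>distr ?\<pi> borel snd)"
    using A by simp
  also have "\<dots> = (\<integral>\<^sup>+q. indicator A (snd q) \<partial>?\<pi>)"
    using A measurable_snd_borel by (intro nn_integral_distr) (auto simp: split_coupling_def)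
  also have "\<dots> = emeasure (zeta \<alpha> a b x) A"
    using A measurable_compose[OF measurable_snd_borel borel_measurable_indicator]
    by (subst nn_integral_split_coupling[OF \<mu> \<phi>(1,2)]) (auto simp: weights emeasure_zeta)
  finally show "emeasure (distr ?\<pi> borel snd) A = emeasure (zeta \<alpha> a b x) A" .
qed simp

lemma split_coupling_in_couplings:
  fixes \<mu> :: "'a::{real_normed_vector, second_countable_topology} measure" and \<phi> :: "'a \<Rightarrow> real"
  assumes \<mu>: "prob_space \<mu>" "sets \<mu> = sets borel"
    and \<phi>: "\<phi> \<in> borel_measurable borel" "\<And>w. 0 \<le> \<phi> w \<and> \<phi> w \<le> 1" "(\<integral>w. \<phi> w \<partial>\<mu>) = \<alpha>"
  shows "split_coupling \<mu> \<phi> (a *\<^sub>R x) (b *\<^sub>R x) \<in> couplings \<mu> (zeta \<alpha> a b x)"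
  using prob_space_split_coupling[OF \<mu> \<phi>(1,2)] distr_fst_split_coupling[OF \<mu> \<phi>(1)]
    distr_snd_split_coupling[OF \<mu> \<phi>] by (simp add: couplings_def split_coupling_def)

definition transport_cost ::
    "('a \<times> 'a \<Rightarrow> real) \<Rightarrow> 'a::{real_normed_vector, second_countable_topology} measure \<Rightarrow> 'a measure \<Rightarrow> ennreal" where
  "transport_cost c \<mu> \<nu> = (INF \<pi>\<in>couplings \<mu> \<nu>. \<integral>\<^sup>+q. ennreal (c q) \<partial>\<pi>)"

lemma wasserstein_eq_transport_cost:
  "wasserstein p \<mu> \<nu> = enn2real (transport_cost (\<lambda>q. norm (fst q - snd q) powr p) \<mu> \<nu>) powr min (1/p) 1"
  unfolding wasserstein_def transport_cost_def ..

lemma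
  fixes \<pi> :: "('a::{real_normed_vector, second_countable_topology} \<times> 'a) measure"
  assumes "\<pi> \<in> couplings \<mu> \<nu>"
  shows sets_coupling: "sets \<pi> = sets borel"
    and space_coupling: "space \<pi> = UNIV"
    and measurable_fst_coupling: "fst \<in> \<pi> \<rightarrow>\<^sub>M borel"
    and measurable_snd_coupling: "snd \<in> \<pi> \<rightarrow>\<^sub>M borel"
proof -
  show sets: "sets \<pi> = sets borel"
    using assms by (simp add: couplings_def)
  then show "space \<pi> = UNIV"
    by (metis sets_eq_imp_space_eq space_borel)
  show "fst \<in> \<pi> \<rightarrow>\<^sub>M borel" "snd \<in> \<pi> \<rightarrow>\<^sub>M borel"
    unfolding measurable_cong_sets[OF sets refl] by (rule measurable_fst_borel measurable_snd_borel)+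
qed

lemma nn_integral_coupling_zeta_ge:
  fixes \<pi> :: "('a::{real_normed_vector, second_countable_topology} \<times> 'a) measure"
  assumes \<pi>: "\<pi> \<in> couplings \<mu> (zeta \<alpha> a b x)"
    and c: "c \<in> borel_measurable borel" "\<And>q. 0 \<le> c q"
    and D: "D \<in> sets borel" "\<And>w. w \<in> D \<Longrightarrow> c (w, a *\<^sub>R x) + \<epsilon> \<le> c (w, b *\<^sub>R x)"
    and \<epsilon>: "0 \<le> \<epsilon>"
  shows "(\<integral>\<^sup>+w. ennreal (min (c (w, a *\<^sub>R x)) (c (w, b *\<^sub>R x))) \<partial>\<mu>) + ennreal \<epsilon> * emeasure \<pi> (D \<times> {b *\<^sub>R x})
    \<le> (\<integral>\<^sup>+q. ennreal (c q) \<partial>\<pi>)"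
proof -
  define y z where "y = a *\<^sub>R x" and "z = b *\<^sub>R x"
  define h where "h w = min (c (w, y)) (c (w, z))" for w
  have h_meas: "h \<in> borel_measurable borel"
    unfolding h_def using measurable_compose[OF measurable_Pair_const_borel c(1)] by measurable
  from \<pi> have \<pi>_fst: "distr \<pi> borel fst = \<mu>" and \<pi>_snd: "distr \<pi> borel snd = zeta \<alpha> a b x"
    by (simp_all add: couplings_def)
  have "AE v in distr \<pi> borel snd. v \<in> {y, z}"
    unfolding \<pi>_snd y_def z_def by (rule AE_zeta)
  then have "AE q in \<pi>. snd q \<in> {y, z}"
    using measurable_snd_coupling[OF \<pi>] by (subst (asm) AE_distr_iff) auto
  then have "AE q in \<pi>. ennreal (h (fst q)) + ennreal \<epsilon> * indicator (D \<times> {z}) q \<le> ennreal (c q)"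
  proof (rule AE_mp, intro AE_I2 impI)
    fix q :: "'a \<times> 'a" assume "snd q \<in> {y, z}"
    then obtain u where "q = (u, y) \<or> q = (u, z)"
      by (metis insert_iff prod.collapse singletonD)
    then have "h (fst q) + \<epsilon> * indicator (D \<times> {z}) q \<le> c q"
      using D(2)[of "fst q"] c(2) \<epsilon> by (auto simp: h_def y_def z_def indicator_def)
    then show "ennreal (h (fst q)) + ennreal \<epsilon> * indicator (D \<times> {z}) q \<le> ennreal (c q)"
      using \<epsilon> c(2) by (cases "q \<in> D \<times> {z}") (simp_all add: h_def ennreal_plus[symmetric] ennreal_leI del: ennreal_plus)
  qed
  then have "(\<integral>\<^sup>+q. ennreal (h (fst q)) + ennreal \<epsilon> * indicator (D \<times> {z}) q \<partial>\<pi>) \<le> (\<integral>\<^sup>+q. ennreal (c q) \<partial>\<pi>)"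
    by (rule nn_integral_mono_AE)
  moreover have "(\<integral>\<^sup>+q. ennreal (h (fst q)) + ennreal \<epsilon> * indicator (D \<times> {z}) q \<partial>\<pi>)
      = (\<integral>\<^sup>+q. ennreal (h (fst q)) \<partial>\<pi>) + ennreal \<epsilon> * emeasure \<pi> (D \<times> {z})"
    using h_meas measurable_fst_coupling[OF \<pi>] Times_in_sets_borel[OF D(1), of "{z}"] sets_coupling[OF \<pi>]
    by (subst nn_integral_add) (auto simp: nn_integral_cmult_indicator)
  moreover have "(\<integral>\<^sup>+q. ennreal (h (fst q)) \<partial>\<pi>) = (\<integral>\<^sup>+w. ennreal (h w) \<partial>\<mu>)"
    using h_meas unfolding \<pi>_fst[symmetric] by (simp add: nn_integral_distr measurable_fst_coupling[OF \<pi>])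
  ultimately show ?thesis
    by (simp add: h_def y_def z_def)
qed

lemma measure_coupling_zeta_Times_ge:
  fixes \<pi> :: "('a::{real_normed_vector, second_countable_topology} \<times> 'a) measure"
  assumes \<pi>: "\<pi> \<in> couplings \<mu> (zeta \<alpha> a b x)"
    and "0 \<le> \<alpha>" "a *\<^sub>R x \<noteq> b *\<^sub>R x" "D \<in> sets borel"
  shows "measure \<mu> D - \<alpha> \<le> measure \<pi> (D \<times> {b *\<^sub>R x})"
proof -
  interpret prob_space \<pi>
    using \<pi> by (simp add: couplings_def)
  from \<pi> have \<pi>_fst: "distr \<pi> borel fst = \<mu>" and \<pi>_snd: "distr \<pi> borel snd = zeta \<alpha> a b x"
    by (simp_all add: couplings_def)
  have sets: "D \<times> UNIV \<in> sets \<pi>" "D \<times> {b *\<^sub>R x} \<in> sets \<pi>" "UNIV \<times> - {b *\<^sub>R x} \<in> sets \<pi>"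
    using assms(4) by (auto simp: sets_coupling[OF \<pi>] intro!: Times_in_sets_borel)
  have "measure \<mu> D = measure \<pi> (fst -` D \<inter> space \<pi>)"
    unfolding \<pi>_fst[symmetric] using assms(4) measurable_fst_coupling[OF \<pi>] by (simp add: measure_distr)
  also have "fst -` D \<inter> space \<pi> = D \<times> UNIV"
    by (auto simp: space_coupling[OF \<pi>])
  also have "measure \<pi> (D \<times> UNIV) \<le> measure \<pi> (D \<times> {b *\<^sub>R x} \<union> UNIV \<times> - {b *\<^sub>R x})"
    using sets by (intro finite_measure_mono) auto
  also have "\<dots> \<le> measure \<pi> (D \<times> {b *\<^sub>R x}) + measure \<pi> (UNIV \<times> - {b *\<^sub>R x})"
    using sets(2,3) by (rule measure_Un_le)
  also have "UNIV \<times> - {b *\<^sub>R x} = snd -` (- {b *\<^sub>R x}) \<inter> space \<pi>"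
    by (auto simp: space_coupling[OF \<pi>])
  also have "measure \<pi> \<dots> = measure (zeta \<alpha> a b x) (- {b *\<^sub>R x})"
    unfolding \<pi>_snd[symmetric] using measurable_snd_coupling[OF \<pi>] by (simp add: measure_distr)
  also have "\<dots> = \<alpha>"
    using assms(2,3) by (simp add: measure_def emeasure_zeta)
  finally show ?thesis
    by simp
qed

lemma min_cost_le_transport_cost_zeta:
  fixes \<mu> :: "'a::{real_normed_vector, second_countable_topology} measure"
  assumes "c \<in> borel_measurable borel" "\<And>q. 0 \<le> c q"
  shows "(\<integral>\<^sup>+w. ennreal (min (c (w, a *\<^sub>R x)) (c (w, b *\<^sub>R x))) \<partial>\<mu>) \<le> transport_cost c \<mu> (zeta \<alpha> a b x)"
  unfolding transport_cost_def
proof (rule INF_greatest)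
  fix \<pi> assume "\<pi> \<in> couplings \<mu> (zeta \<alpha> a b x)"
  from nn_integral_coupling_zeta_ge[OF this assms, of "{}" 0]
  show "(\<integral>\<^sup>+w. ennreal (min (c (w, a *\<^sub>R x)) (c (w, b *\<^sub>R x))) \<partial>\<mu>) \<le> (\<integral>\<^sup>+q. ennreal (c q) \<partial>\<pi>)"
    by simp
qed

lemma min_cost_less_transport_cost_zeta:
  fixes \<mu> :: "'a::{real_normed_vector, second_countable_topology} measure"
  assumes \<mu>: "prob_space \<mu>" "sets \<mu> = sets borel"
    and c: "c \<in> borel_measurable borel" "\<And>q. 0 \<le> c q"
    and finite: "(\<integral>\<^sup>+w. ennreal (min (c (w, a *\<^sub>R x)) (c (w, b *\<^sub>R x))) \<partial>\<mu>) < \<infinity>"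
    and \<alpha>: "0 \<le> \<alpha>" "\<alpha> < measure \<mu> {w. c (w, a *\<^sub>R x) < c (w, b *\<^sub>R x)}"
  shows "(\<integral>\<^sup>+w. ennreal (min (c (w, a *\<^sub>R x)) (c (w, b *\<^sub>R x))) \<partial>\<mu>) < transport_cost c \<mu> (zeta \<alpha> a b x)"
    (is "?L < _")
proof -
  interpret prob_space \<mu>
    by (rule \<mu>(1))
  have space: "space \<mu> = UNIV"
    using sets_eq_imp_space_eq[OF \<mu>(2)] by simp
  have slice: "(\<lambda>w. c (w, v)) \<in> borel_measurable \<mu>" for v
    unfolding measurable_cong_sets[OF \<mu>(2) refl] using measurable_compose[OF measurable_Pair_const_borel c(1)] .
  have "a *\<^sub>R x \<noteq> b *\<^sub>R x"
    using \<alpha> by auto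
  \<comment> \<open>A margin \<open>\<epsilon>\<close> makes the excess cost uniform over all couplings, so it survives the infimum.\<close>
  obtain \<epsilon> where \<epsilon>: "0 < \<epsilon>" and "\<alpha> < measure \<mu> {w. c (w, a *\<^sub>R x) + \<epsilon> \<le> c (w, b *\<^sub>R x)}" (is "_ < measure \<mu> ?D")
    using measure_margin_set_gt[OF slice slice, of \<alpha>] \<alpha>(2) by (auto simp: space)
  then have gain: "0 < ennreal (\<epsilon> * (measure \<mu> ?D - \<alpha>))"
    by simp
  have D: "?D \<in> sets borel"
    using slice unfolding measurable_cong_sets[OF \<mu>(2) refl] by measurable
  have "?L < ?L + ennreal (\<epsilon> * (measure \<mu> ?D - \<alpha>))"
    using finite gain by (simp add: ennreal_add_left_cancel_less[of _ 0, simplified])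
  also have "\<dots> \<le> transport_cost c \<mu> (zeta \<alpha> a b x)"
    unfolding transport_cost_def
  proof (rule INF_greatest)
    fix \<pi> assume \<pi>: "\<pi> \<in> couplings \<mu> (zeta \<alpha> a b x)"
    then interpret \<pi>: prob_space \<pi>
      by (simp add: couplings_def)
    have "ennreal (\<epsilon> * (measure \<mu> ?D - \<alpha>)) \<le> ennreal \<epsilon> * emeasure \<pi> (?D \<times> {b *\<^sub>R x})"
      using measure_coupling_zeta_Times_ge[OF \<pi> \<alpha>(1) \<open>a *\<^sub>R x \<noteq> b *\<^sub>R x\<close> D] \<epsilon>
      by (simp add: \<pi>.emeasure_eq_measure ennreal_mult[symmetric] ennreal_leI)
    then have "?L + ennreal (\<epsilon> * (measure \<mu> ?D - \<alpha>)) \<le> ?L + ennreal \<epsilon> * emeasure \<pi> (?D \<times> {b *\<^sub>R x})"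
      by (rule add_left_mono)
    also have "\<dots> \<le> (\<integral>\<^sup>+q. ennreal (c q) \<partial>\<pi>)"
      by (rule nn_integral_coupling_zeta_ge[OF \<pi> c D _ less_imp_le[OF \<epsilon>]]) simp
    finally show "?L + ennreal (\<epsilon> * (measure \<mu> ?D - \<alpha>)) \<le> (\<integral>\<^sup>+q. ennreal (c q) \<partial>\<pi>)" .
  qed
  finally show ?thesis .
qed

lemma transport_cost_zeta_le_min_cost:
  fixes \<mu> :: "'a::{real_normed_vector, second_countable_topology} measure"
  assumes \<mu>: "prob_space \<mu>" "sets \<mu> = sets borel"
    and c: "c \<in> borel_measurable borel"
    and \<alpha>: "measure \<mu> {w. c (w, a *\<^sub>R x) < c (w, b *\<^sub>R x)} \<le> \<alpha>"
      "\<alpha> \<le> measure \<mu> {w. c (w, a *\<^sub>R x) \<le> c (w, b *\<^sub>R x)}"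
  shows "transport_cost c \<mu> (zeta \<alpha> a b x) \<le> (\<integral>\<^sup>+w. ennreal (min (c (w, a *\<^sub>R x)) (c (w, b *\<^sub>R x))) \<partial>\<mu>)"
proof -
  interpret prob_space \<mu>
    by (rule \<mu>(1))
  define y z where "y = a *\<^sub>R x" and "z = b *\<^sub>R x"
  define A where "A = {w. c (w, y) < c (w, z)}"
  define B where "B = {w. c (w, y) = c (w, z)}"
  have slice: "(\<lambda>w. c (w, v)) \<in> borel_measurable borel" for v
    using measurable_compose[OF measurable_Pair_const_borel c] .
  have sets: "A \<in> sets \<mu>" "B \<in> sets \<mu>"
    unfolding A_def B_def \<mu>(2) using slice by measurable
  have "{w. c (w, y) \<le> c (w, z)} = A \<union> B" "A \<inter> B = {}"
    unfolding A_def B_def by auto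
  then have \<alpha>_bounds: "measure \<mu> A \<le> \<alpha>" "\<alpha> \<le> measure \<mu> A + measure \<mu> B"
    using \<alpha> finite_measure_Union[OF sets] by (simp_all add: A_def y_def z_def)
  obtain t where t: "0 \<le> t" "t \<le> 1" "measure \<mu> A + t * measure \<mu> B = \<alpha>"
    using measure_nonneg[of \<mu> B] \<alpha>_bounds by (rule obtain_interpolation_weight)
  define \<phi> where "\<phi> w = indicator A w + t * indicator B w" for w
  have \<phi>_meas: "\<phi> \<in> borel_measurable borel"
    unfolding \<phi>_def using sets \<mu>(2) by measurable
  have \<phi>_bounds: "0 \<le> \<phi> w \<and> \<phi> w \<le> 1" for w
    using t unfolding \<phi>_def A_def B_def by (auto simp: indicator_def)
  have "(\<integral>w. \<phi> w \<partial>\<mu>) = measure \<mu> A + t * measure \<mu> B"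
    unfolding \<phi>_def using sets
    by (subst Bochner_Integration.integral_add) (auto simp: emeasure_eq_measure)
  then have \<pi>: "split_coupling \<mu> \<phi> y z \<in> couplings \<mu> (zeta \<alpha> a b x)"
    unfolding y_def z_def using t(3) by (intro split_coupling_in_couplings[OF \<mu> \<phi>_meas \<phi>_bounds]) auto
  have "transport_cost c \<mu> (zeta \<alpha> a b x) \<le> (\<integral>\<^sup>+q. ennreal (c q) \<partial>split_coupling \<mu> \<phi> y z)"
    unfolding transport_cost_def using \<pi> by (rule INF_lower)
  also have "\<dots> = (\<integral>\<^sup>+w. ennreal (\<phi> w) * ennreal (c (w, y)) + ennreal (1 - \<phi> w) * ennreal (c (w, z)) \<partial>\<mu>)"
    using c by (intro nn_integral_split_coupling[OF \<mu> \<phi>_meas \<phi>_bounds]) auto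
  also have "\<dots> = (\<integral>\<^sup>+w. ennreal (min (c (w, y)) (c (w, z))) \<partial>\<mu>)"
    using t(1,2) by (intro nn_integral_cong ennreal_weighted_eq_min) (auto simp: \<phi>_def A_def B_def indicator_def)
  finally show ?thesis
    unfolding y_def z_def .
qed

lemma transport_cost_zeta_finite:
  fixes \<mu> :: "'a::{real_normed_vector, second_countable_topology} measure"
  assumes \<mu>: "prob_space \<mu>" "sets \<mu> = sets borel"
    and c: "c \<in> borel_measurable borel"
    and \<alpha>: "0 \<le> \<alpha>" "\<alpha> \<le> 1"
    and finite: "\<And>v. (\<integral>\<^sup>+w. ennreal (c (w, v)) \<partial>\<mu>) < \<infinity>"
  shows "transport_cost c \<mu> (zeta \<alpha> a b x) < \<infinity>"
proof -
  interpret prob_space \<mu>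
    by (rule \<mu>(1))
  define y z where "y = a *\<^sub>R x" and "z = b *\<^sub>R x"
  have slice: "(\<lambda>w. c (w, v)) \<in> borel_measurable \<mu>" for v
    unfolding measurable_cong_sets[OF \<mu>(2) refl] using measurable_compose[OF measurable_Pair_const_borel c] .
  have "split_coupling \<mu> (\<lambda>_. \<alpha>) y z \<in> couplings \<mu> (zeta \<alpha> a b x)"
    unfolding y_def z_def using \<alpha> by (intro split_coupling_in_couplings[OF \<mu>]) (auto simp: prob_space)
  then have "transport_cost c \<mu> (zeta \<alpha> a b x) \<le> (\<integral>\<^sup>+q. ennreal (c q) \<partial>split_coupling \<mu> (\<lambda>_. \<alpha>) y z)"
    unfolding transport_cost_def by (rule INF_lower)
  also have "\<dots> = (\<integral>\<^sup>+w. ennreal \<alpha> * ennreal (c (w, y)) + ennreal (1 - \<alpha>) * ennreal (c (w, z)) \<partial>\<mu>)"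
    using c \<alpha> by (intro nn_integral_split_coupling[OF \<mu>]) auto
  also have "\<dots> \<le> (\<integral>\<^sup>+w. ennreal (c (w, y)) + ennreal (c (w, z)) \<partial>\<mu>)"
  proof (intro nn_integral_mono add_mono)
    have "ennreal r * k \<le> k" if "r \<le> 1" for r and k :: ennreal
      using mult_right_mono[of "ennreal r" 1 k] that by simp
    then show "ennreal \<alpha> * ennreal (c (w, y)) \<le> ennreal (c (w, y))"
      and "ennreal (1 - \<alpha>) * ennreal (c (w, z)) \<le> ennreal (c (w, z))" for w
      using \<alpha> by auto
  qed
  also have "\<dots> = (\<integral>\<^sup>+w. ennreal (c (w, y)) \<partial>\<mu>) + (\<integral>\<^sup>+w. ennreal (c (w, z)) \<partial>\<mu>)"
    using slice by (intro nn_integral_add) auto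
  also have "\<dots> < \<infinity>"
    using finite by simp
  finally show ?thesis .
qed

lemma transport_cost_zeta_eq_min_cost_iff:
  fixes \<mu> :: "'a::{real_normed_vector, second_countable_topology} measure"
  assumes \<mu>: "prob_space \<mu>" "sets \<mu> = sets borel"
    and c: "c \<in> borel_measurable borel" "\<And>q. 0 \<le> c q"
    and finite: "(\<integral>\<^sup>+w. ennreal (min (c (w, a *\<^sub>R x)) (c (w, b *\<^sub>R x))) \<partial>\<mu>) < \<infinity>"
    and \<alpha>: "0 \<le> \<alpha>" "\<alpha> \<le> 1"
  shows "transport_cost c \<mu> (zeta \<alpha> a b x) = (\<integral>\<^sup>+w. ennreal (min (c (w, a *\<^sub>R x)) (c (w, b *\<^sub>R x))) \<partial>\<mu>)
    \<longleftrightarrow> \<alpha> \<in> {measure \<mu> {w. c (w, a *\<^sub>R x) < c (w, b *\<^sub>R x)} .. measure \<mu> {w. c (w, a *\<^sub>R x) \<le> c (w, b *\<^sub>R x)}}"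
    (is "?cost \<alpha> a b = ?L a b \<longleftrightarrow> _")
proof
  assume "\<alpha> \<in> {measure \<mu> {w. c (w, a *\<^sub>R x) < c (w, b *\<^sub>R x)} .. measure \<mu> {w. c (w, a *\<^sub>R x) \<le> c (w, b *\<^sub>R x)}}"
  then show "?cost \<alpha> a b = ?L a b"
    using transport_cost_zeta_le_min_cost[OF \<mu> c(1)] min_cost_le_transport_cost_zeta[OF c]
    by (auto intro: order.antisym)
next
  interpret prob_space \<mu>
    by (rule \<mu>(1))
  assume cost: "?cost \<alpha> a b = ?L a b"
  have "\<not> \<alpha> < measure \<mu> {w. c (w, a *\<^sub>R x) < c (w, b *\<^sub>R x)}"
    using min_cost_less_transport_cost_zeta[OF \<mu> c finite \<alpha>(1)] cost by auto
  moreover have "\<not> 1 - \<alpha> < measure \<mu> {w. c (w, b *\<^sub>R x) < c (w, a *\<^sub>R x)}"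
  proof
    assume "1 - \<alpha> < measure \<mu> {w. c (w, b *\<^sub>R x) < c (w, a *\<^sub>R x)}"
    then have "?L b a < ?cost (1 - \<alpha>) b a"
      using finite \<alpha>(2) by (intro min_cost_less_transport_cost_zeta[OF \<mu> c]) (auto simp: min.commute)
    then show False
      using cost by (simp add: zeta_swap[of \<alpha> a b] min.commute)
  qed
  moreover have "measure \<mu> {w. c (w, b *\<^sub>R x) < c (w, a *\<^sub>R x)} = 1 - measure \<mu> {w. c (w, a *\<^sub>R x) \<le> c (w, b *\<^sub>R x)}"
  proof -
    have "(\<lambda>w. c (w, v)) \<in> borel_measurable borel" for v
      using measurable_compose[OF measurable_Pair_const_borel c(1)] .
    then have "{w. c (w, a *\<^sub>R x) \<le> c (w, b *\<^sub>R x)} \<in> events"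
      unfolding \<mu>(2) by measurable
    moreover have "{w. c (w, b *\<^sub>R x) < c (w, a *\<^sub>R x)} = space \<mu> - {w. c (w, a *\<^sub>R x) \<le> c (w, b *\<^sub>R x)}"
      using sets_eq_imp_space_eq[OF \<mu>(2)] by auto
    ultimately show ?thesis
      by (simp add: prob_compl)
  qed
  ultimately show "\<alpha> \<in> {measure \<mu> {w. c (w, a *\<^sub>R x) < c (w, b *\<^sub>R x)} .. measure \<mu> {w. c (w, a *\<^sub>R x) \<le> c (w, b *\<^sub>R x)}}"
    by auto
qed

lemma nn_integral_norm_diff_powr_finite:
  fixes \<mu> :: "'a::{real_normed_vector, second_countable_topology} measure"
  assumes p: "0 < p" and \<mu>: "\<mu> \<in> Wp_space p"
  shows "(\<integral>\<^sup>+w. ennreal (norm (w - v) powr p) \<partial>\<mu>) < \<infinity>"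
proof -
  from \<mu> have sets: "sets \<mu> = sets borel" and prob: "prob_space \<mu>"
    and moment: "(\<integral>\<^sup>+w. ennreal (norm w powr p) \<partial>\<mu>) < \<infinity>"
    by (auto simp: Wp_space_def)
  have "(\<integral>\<^sup>+w. ennreal (norm (w - v) powr p) \<partial>\<mu>)
      \<le> (\<integral>\<^sup>+w. ennreal (2 powr p) * (ennreal (norm w powr p) + ennreal (norm v powr p)) \<partial>\<mu>)"
  proof (rule nn_integral_mono)
    fix w
    have "norm (w - v) powr p \<le> (norm w + norm v) powr p"
      using p by (intro powr_mono2) (auto simp: norm_triangle_ineq4)
    also have "\<dots> \<le> 2 powr p * (norm w powr p + norm v powr p)"
      using p by (intro add_powr_le_two_powr) auto
    finally show "ennreal (norm (w - v) powr p) \<le> ennreal (2 powr p) * (ennreal (norm w powr p) + ennreal (norm v powr p))"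
      by (simp add: ennreal_mult[symmetric] ennreal_plus[symmetric] ennreal_leI del: ennreal_plus)
  qed
  also have "\<dots> = ennreal (2 powr p) * ((\<integral>\<^sup>+w. ennreal (norm w powr p) \<partial>\<mu>) + ennreal (norm v powr p))"
  proof -
    have "(\<lambda>w. ennreal (norm w powr p)) \<in> borel_measurable \<mu>"
      unfolding measurable_cong_sets[OF sets refl] by measurable
    then show ?thesis
      using prob_space.emeasure_space_1[OF prob] by (simp add: nn_integral_cmult nn_integral_add)
  qed
  also have "\<dots> < \<infinity>"
    using moment by (simp add: ennreal_mult_less_top)
  finally show ?thesis .
qed

lemma transport_cost_zeta_minimizers:
  fixes \<mu> :: "'a::{real_normed_vector, second_countable_topology} measure"
  assumes \<mu>: "prob_space \<mu>" "sets \<mu> = sets borel"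
    and c: "c \<in> borel_measurable borel" "\<And>q. 0 \<le> c q"
    and finite: "\<And>v. (\<integral>\<^sup>+w. ennreal (c (w, v)) \<partial>\<mu>) < \<infinity>"
    and r: "0 < r"
  shows "{\<alpha> \<in> {0..1}. enn2real (transport_cost c \<mu> (zeta \<alpha> a b x)) powr r
      = (INF \<alpha>\<in>{0..1}. enn2real (transport_cost c \<mu> (zeta \<alpha> a b x)) powr r)}
    = {measure \<mu> {w. c (w, a *\<^sub>R x) < c (w, b *\<^sub>R x)} .. measure \<mu> {w. c (w, a *\<^sub>R x) \<le> c (w, b *\<^sub>R x)}}"
    (is "_ = ?I")
proof -
  interpret prob_space \<mu>
    by (rule \<mu>(1))
  define L where "L = (\<integral>\<^sup>+w. ennreal (min (c (w, a *\<^sub>R x)) (c (w, b *\<^sub>R x))) \<partial>\<mu>)"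
  have "L \<le> (\<integral>\<^sup>+w. ennreal (c (w, a *\<^sub>R x)) \<partial>\<mu>)"
    unfolding L_def by (intro nn_integral_mono) (simp add: ennreal_leI)
  then have L_finite: "L < \<infinity>"
    using finite[of "a *\<^sub>R x"] by (rule order.strict_trans1)
  have cost_eq_iff: "transport_cost c \<mu> (zeta \<alpha> a b x) = L \<longleftrightarrow> \<alpha> \<in> ?I" if "\<alpha> \<in> {0..1}" for \<alpha>
    unfolding L_def using L_finite that
    by (intro transport_cost_zeta_eq_min_cost_iff[OF \<mu> c]) (auto simp: L_def)
  show ?thesis
  proof (rule argmin_set_eqI)
    show "?I \<subseteq> {0..1}"
      by auto
    have "(\<lambda>w. c (w, v)) \<in> borel_measurable borel" for v
      using measurable_compose[OF measurable_Pair_const_borel c(1)] .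
    then have "{w. c (w, a *\<^sub>R x) \<le> c (w, b *\<^sub>R x)} \<in> events"
      unfolding \<mu>(2) by measurable
    then show "?I \<noteq> {}"
      by (auto intro!: finite_measure_mono)
    show "enn2real (transport_cost c \<mu> (zeta \<alpha> a b x)) powr r = enn2real L powr r" if "\<alpha> \<in> ?I" for \<alpha>
      using that cost_eq_iff[of \<alpha>] subsetD[OF \<open>?I \<subseteq> {0..1}\<close> that] by simp
    show "enn2real L powr r < enn2real (transport_cost c \<mu> (zeta \<alpha> a b x)) powr r" if "\<alpha> \<in> {0..1} - ?I" for \<alpha>
    proof -
      have "L < transport_cost c \<mu> (zeta \<alpha> a b x)"
        using that cost_eq_iff[of \<alpha>] min_cost_le_transport_cost_zeta[OF c, of \<mu> a x b \<alpha>]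
        unfolding L_def by auto
      moreover have "transport_cost c \<mu> (zeta \<alpha> a b x) < \<infinity>"
        using that finite by (intro transport_cost_zeta_finite[OF \<mu> c(1)]) auto
      ultimately have "enn2real L < enn2real (transport_cost c \<mu> (zeta \<alpha> a b x))"
        using L_finite by simp
      then show ?thesis
        using r by (intro powr_less_mono2) auto
    qed
  qed
qed

lemma wasserstein_zeta_minimizers:
  fixes \<mu> :: "'a::{real_normed_vector, second_countable_topology} measure"
  assumes p: "0 < p" and \<mu>: "\<mu> \<in> Wp_space p"
  shows "{\<alpha> \<in> {0..1}. wasserstein p \<mu> (zeta \<alpha> a b x) = (INF \<alpha>\<in>{0..1}. wasserstein p \<mu> (zeta \<alpha> a b x))}
    = {measure \<mu> {w. norm (w - a *\<^sub>R x) < norm (w - b *\<^sub>R x)} .. measure \<mu> {w. norm (w - a *\<^sub>R x) \<le> norm (w - b *\<^sub>R x)}}"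
proof -
  define c where "c q = norm (fst q - snd q) powr p" for q :: "'a \<times> 'a"
  from \<mu> have prob: "prob_space \<mu>" and sets: "sets \<mu> = sets borel"
    by (auto simp: Wp_space_def)
  have c: "c \<in> borel_measurable borel" "\<And>q. 0 \<le> c q"
    unfolding c_def by (simp_all add: borel_prod[symmetric])
  have "{\<alpha> \<in> {0..1}. wasserstein p \<mu> (zeta \<alpha> a b x) = (INF \<alpha>\<in>{0..1}. wasserstein p \<mu> (zeta \<alpha> a b x))}
      = {measure \<mu> {w. c (w, a *\<^sub>R x) < c (w, b *\<^sub>R x)} .. measure \<mu> {w. c (w, a *\<^sub>R x) \<le> c (w, b *\<^sub>R x)}}"
    unfolding wasserstein_eq_transport_cost c_def[symmetric]
    using nn_integral_norm_diff_powr_finite[OF p \<mu>] p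
    by (intro transport_cost_zeta_minimizers[OF prob sets c]) (auto simp: c_def)
  also have "\<dots> = {measure \<mu> {w. norm (w - a *\<^sub>R x) < norm (w - b *\<^sub>R x)} .. measure \<mu> {w. norm (w - a *\<^sub>R x) \<le> norm (w - b *\<^sub>R x)}}"
    unfolding c_def using p by (simp add: powr_less_powr_iff not_less[symmetric])
  finally show ?thesis .
qed

theorem lemma3p17:
  fixes \<mu> :: "'a::{real_inner, complete_space, second_countable_topology} measure"
    and p a b :: real and x :: 'a
  assumes "0 < p" and "\<mu> \<in> Wp_space p" and "x \<noteq> 0" and "a \<noteq> b"
  defines "m \<equiv> (INF \<alpha>\<in>{0..1}. wasserstein p \<mu> (zeta \<alpha> a b x))"
  defines "S \<equiv> {\<alpha>\<in>{0..1}. wasserstein p \<mu> (zeta \<alpha> a b x) = m}"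
  shows "measure \<mu> (bisector (a *\<^sub>R x) (b *\<^sub>R x)) = Sup S - Inf S"
proof -
  let ?closer = "{w. norm (w - a *\<^sub>R x) < norm (w - b *\<^sub>R x)}"
  let ?not_farther = "{w. norm (w - a *\<^sub>R x) \<le> norm (w - b *\<^sub>R x)}"
  have S: "S = {measure \<mu> ?closer .. measure \<mu> ?not_farther}"
    unfolding S_def m_def using wasserstein_zeta_minimizers[OF assms(1,2)] .
  from assms(2) interpret prob_space \<mu>
    by (simp add: Wp_space_def)
  have sets: "?closer \<in> events" "bisector (a *\<^sub>R x) (b *\<^sub>R x) \<in> events"
    using assms(2) by (auto simp: Wp_space_def bisector_def)
  have "?not_farther = ?closer \<union> bisector (a *\<^sub>R x) (b *\<^sub>R x)" "?closer \<inter> bisector (a *\<^sub>R x) (b *\<^sub>R x) = {}"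
    by (auto simp: bisector_def norm_minus_commute)
  then have "measure \<mu> ?not_farther = measure \<mu> ?closer + measure \<mu> (bisector (a *\<^sub>R x) (b *\<^sub>R x))"
    using finite_measure_Union[OF sets] by simp
  then show ?thesis
    unfolding S by simp
qed

end
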